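(* The irreducible $\lambda$-quiddities over $(\mathbb{Z}/2\mathbb{Z})\times(\mathbb{Z}/3\mathbb{Z})$ are exactly, up to cyclic permutation, the following (entries are pairs (residue mod 2, residue mod 3)): - $((1,1),(1,1),(1,1))$, $((1,-1),(1,-1),(1,-1))$; - $((0,0),(0,0),(0,0),(0,0))$, $((0,0),(0,1),(0,0),(0,-1))$, $((0,0),(1,0),(0,0),(1,0))$, $((0,1),(0,-1),(0,1),(0,-1))$, $((1,0),(0,-1),(1,0),(0,1))$; - $((1,0),(1,0),(1,0),(1,0),(1,0),(1,0))$, $((0,1),(0,1),(0,1),(0,1),(0,1),(0,1))$, $((0,-1),(0,-1),(0,-1),(0,-1),(0,-1),(0,-1))$.
   Context: For $a_1,\ldots,a_n$ in a commutative unital ring $A$, $M_n(a_1,\ldots,a_n)=\begin{pmatrix}a_n&-1\\1&0\end{pmatrix}\cdots\begin{pmatrix}a_1&-1\\1&0\end{pmatrix}$. An $n$-tuple $(a_1,\ldots,a_n)\in A^n$ is a $\lambda$-quiddity over $A$ if $M_n(a_1,\ldots,a_n)=\pm\mathrm{Id}$. For $(a_1,\ldots,a_n)\in A^n$, $(b_1,\ldots,b_m)\in A^m$, define $(a_1,\ldots,a_n)\oplus(b_1,\ldots,b_m)=(a_1+b_m,a_2,\ldots,a_{n-1},a_n+b_1,b_2,\ldots,b_{m-1})$. Write $(a_1,\ldots,a_n)\sim(b_1,\ldots,b_n)$ if $(b_1,\ldots,b_n)$ is obtained from $(a_1,\ldots,a_n)$ or from $(a_n,\ldots,a_1)$ by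 a cyclic permutation. A $\lambda$-quiddity $(c_1,\ldots,c_n)$ with $n\ge3$ is reducible if there exist a $\lambda$-quiddity $(b_1,\ldots,b_l)$ and a tuple $(a_1,\ldots,a_m)$ with $l,m\ge3$ and $(c_1,\ldots,c_n)\sim(a_1,\ldots,a_m)\oplus(b_1,\ldots,b_l)$; it is irreducible otherwise (by convention $(0,0)$ is reducible). *)

theory Defs
  imports Main "HOL-Library.Product_Plus" "HOL-Library.Numeral_Type"
begin

instantiation prod :: (times, times) times
begin
definition times_prod_def: "x * y = (fst x * fst y, snd x * snd y)"
instance ..
end

instantiation prod :: (one, one) one
begin
definition one_prod_def: "1 = (1, 1)"
instance ..
end

instance prod :: (comm_ring_1, comm_ring_1) comm_ring_1
  by standard (auto simp: times_prod_def one_prod_def zero_prod_def plus_prod_def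
      algebra_simps prod_eq_iff)

section \<open>2x2 matrices, represented as (m11, m12, m21, m22)\<close>

type_synonym 'a mat2 = "'a \<times> 'a \<times> 'a \<times> 'a"

fun mmul2 :: "'a::comm_ring_1 mat2 \<Rightarrow> 'a mat2 \<Rightarrow> 'a mat2" where
  "mmul2 (a, b, c, d) (e, f, g, h) = (a*e + b*g, a*f + b*h, c*e + d*g, c*f + d*h)"

definition id2 :: "'a::comm_ring_1 mat2" where
  "id2 = (1, 0, 0, 1)"

definition neg_id2 :: "'a::comm_ring_1 mat2" where
  "neg_id2 = (-1, 0, 0, -1)"

definition elem_mat :: "'a::comm_ring_1 \<Rightarrow> 'a mat2" where
  "elem_mat a = (a, -1, 1, 0)"

text \<open>M_n(a_1,...,a_n) = E(a_n) * ... * E(a_1), where E(a) = [[a,-1],[1,0]].\<close>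
definition Mquid :: "'a::comm_ring_1 list \<Rightarrow> 'a mat2" where
  "Mquid xs = foldl (\<lambda>m a. mmul2 (elem_mat a) m) id2 xs"

definition lambda_quiddity :: "'a::comm_ring_1 list \<Rightarrow> bool" where
  "lambda_quiddity xs \<longleftrightarrow> Mquid xs = id2 \<or> Mquid xs = neg_id2"

text \<open>(a_1..a_n) \<oplus> (b_1..b_m) = (a_1+b_m, a_2,..,a_{n-1}, a_n+b_1, b_2,..,b_{m-1})\<close>
definition quid_sum :: "'a::comm_ring_1 list \<Rightarrow> 'a list \<Rightarrow> 'a list" where
  "quid_sum as bs =
     [hd as + last bs] @ take (length as - 2) (drop 1 as) @ [last as + hd bs]
       @ take (length bs - 2) (drop 1 bs)"

definition quid_equiv :: "'a list \<Rightarrow> 'a list \<Rightarrow> bool" where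
  "quid_equiv xs ys \<longleftrightarrow> (\<exists>k. ys = rotate k xs \<or> ys = rotate k (rev xs))"

definition reducible_quid :: "'a::comm_ring_1 list \<Rightarrow> bool" where
  "reducible_quid cs \<longleftrightarrow> lambda_quiddity cs \<and> length cs \<ge> 3 \<and>
     (\<exists>as bs. length as \<ge> 3 \<and> length bs \<ge> 3 \<and> lambda_quiddity bs \<and>
        quid_equiv cs (quid_sum as bs))"

text \<open>Irreducible: a lambda-quiddity of length at least 3 that is not reducible.
  (Length-1 tuples are never lambda-quiddities; the only length-2 one, (0,0),
  is reducible by convention.)\<close>
definition irreducible_quid :: "'a::comm_ring_1 list \<Rightarrow> bool" where
  "irreducible_quid cs \<longleftrightarrow> lambda_quiddity cs \<and> length cs \<ge> 3 \<and> \<not> reducible_quid cs"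

end

(* A lambda-quiddity is reducible exactly when some rotation or reversal of it splits as
   v @ w with |v| >= 3, w nonempty and continuant K(w) = +-1: the lower right entry of
   E(y) M(w) E(x) is -K(w), so (x, w, y) can be completed to a lambda-quiddity iff K(w) = +-1.
   In (Z/2) x (Z/3) the units are exactly +-1.  Hence in an irreducible lambda-quiddity of
   length n every letter (n >= 4) and every K(a_i, a_(i+1)) = a_(i+1) a_i - 1 (n >= 5) is a
   non-unit.  Lengths 3 and 4 are solved directly from M_n = +-Id; for n >= 5 the adjacency
   condition forces a constant tuple (x, ..., x) with x in {(0,1), (0,-1), (1,0)}, which is no
   lambda-quiddity for n = 5 and has the unit continuant K(x, x, x, x) inside when n >= 7.
   Conversely the listed tuples are closed under rotation and reversal, and a finite check shows
   that none of them has a unit continuant tail. *)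

theory Submission
  imports Defs
begin

lemma mmul2_assoc: "mmul2 (mmul2 A B) C = mmul2 A (mmul2 B C)"
  for A B C :: "'a::comm_ring_1 mat2"
  by (cases A; cases B; cases C) (simp add: algebra_simps)

lemma mmul2_id2 [simp]: "mmul2 id2 A = A" "mmul2 A id2 = A"
  for A :: "'a::comm_ring_1 mat2"
  by (cases A; simp add: id2_def)+

lemma Mquid_Nil [simp]: "Mquid [] = id2"
  by (simp add: Mquid_def)

lemma Mquid_snoc [simp]: "Mquid (xs @ [x]) = mmul2 (elem_mat x) (Mquid xs)"
  by (simp add: Mquid_def)

lemma Mquid_Cons: "Mquid (x # xs) = mmul2 (Mquid xs) (elem_mat x)"
proof -
  have foldl_Mquid: "foldl (\<lambda>m a. mmul2 (elem_mat a) m) m0 xs = mmul2 (Mquid xs) m0" for m0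
    by (induction xs rule: rev_induct) (simp_all add: mmul2_assoc)
  have "Mquid (x # xs) = foldl (\<lambda>m a. mmul2 (elem_mat a) m) (elem_mat x) xs"
    by (simp add: Mquid_def)
  also have "\<dots> = mmul2 (Mquid xs) (elem_mat x)"
    by (rule foldl_Mquid)
  finally show ?thesis .
qed

lemma det_Mquid: "Mquid xs = (p, q, r, s) \<Longrightarrow> p * s - q * r = 1"
proof (induction xs arbitrary: p q r s rule: rev_induct)
  case Nil
  then show ?case by (simp add: id2_def)
next
  case (snoc x xs)
  obtain p' q' r' s' where M: "Mquid xs = (p', q', r', s')"
    by (cases "Mquid xs") auto
  from snoc.prems M have "p = x * p' - r'" "q = x * q' - s'" "r = p'" "s = q'"
    by (auto simp: elem_mat_def)
  then have "p * s - q * r = (x * p' - r') * q' - (x * q' - s') * p'"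
    by simp
  also have "\<dots> = p' * s' - q' * r'"
    by (simp add: algebra_simps)
  finally show ?case
    using snoc.IH[OF M] by simp
qed

definition continuant :: "'a::comm_ring_1 list \<Rightarrow> 'a" where
  "continuant w = fst (Mquid w)"

lemma continuant_singleton [simp]: "continuant [a] = a"
  by (simp add: continuant_def Mquid_def elem_mat_def id2_def)

lemma continuant_pair [simp]: "continuant [a, b] = b * a - 1"
  by (simp add: continuant_def Mquid_def elem_mat_def id2_def)

(* For K(w) = p = +-1 the choice x = -pq, y = pr clears the off-diagonal entries. *)
lemma ex_lambda_quiddity_Cons_snoc_iff:
  "(\<exists>x y. lambda_quiddity (x # w @ [y])) \<longleftrightarrow> continuant w \<in> {1, -1}"
proof -
  obtain p q r s where M: "Mquid w = (p, q, r, s)"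
    by (cases "Mquid w") auto
  have frame: "Mquid (x # w @ [y]) = mmul2 (elem_mat y) (mmul2 (p, q, r, s) (elem_mat x))" for x y
    by (simp add: Mquid_Cons mmul2_assoc M)
  have "p \<in> {1, -1}" if "lambda_quiddity (x # w @ [y])" for x y
    using that frame[of x y]
    by (auto simp: lambda_quiddity_def id2_def neg_id2_def elem_mat_def minus_equation_iff)
  moreover have "lambda_quiddity (- p * q # w @ [p * r])" if p: "p \<in> {1, -1}"
  proof -
    have pp: "p * p = 1"
      using p by auto
    have "p * (p * s - q * r) = p"
      using det_Mquid[OF M] by simp
    then have s: "s = p + p * q * r"
      using pp by (simp add: right_diff_distrib diff_eq_eq flip: mult.assoc)
    have "p * (p * q) = q" "p * (p * r) = r"
      using pp by (simp_all flip: mult.assoc)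
    then have "Mquid (- p * q # w @ [p * r]) = (- p, 0, 0, - p)"
      by (simp add: frame elem_mat_def s algebra_simps)
    then show ?thesis
      using p by (auto simp: lambda_quiddity_def id2_def neg_id2_def)
  qed
  ultimately show ?thesis
    using M by (auto simp: continuant_def)
qed

lemma length_quid_equiv: "quid_equiv xs ys \<Longrightarrow> length ys = length xs"
  by (auto simp: quid_equiv_def)

lemma quid_sum_Cons_snoc:
  "quid_sum (a # as @ [a']) (b # bs @ [b']) = ((a + b') # as @ [a' + b]) @ bs"
  by (simp add: quid_sum_def)

lemma Cons_snoc_cases:
  assumes "2 \<le> length xs"
  obtains x ys y where "xs = x # ys @ [y]"
proof (cases xs)
  case (Cons x xs')
  with assms have "xs' = butlast xs' @ [last xs']"
    by (cases xs' rule: rev_cases) auto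
  with Cons that show ?thesis
    by blast
qed (use assms in simp)

lemma reducible_quid_iff_unit_continuant:
  assumes "lambda_quiddity cs"
  shows "reducible_quid cs \<longleftrightarrow>
    (\<exists>v w. quid_equiv cs (v @ w) \<and> 3 \<le> length v \<and> w \<noteq> [] \<and> continuant w \<in> {1, -1})"
  (is "_ \<longleftrightarrow> ?split")
proof
  assume "reducible_quid cs"
  then obtain as bs where as: "3 \<le> length as" and bs: "3 \<le> length bs" "lambda_quiddity bs"
    and equiv: "quid_equiv cs (quid_sum as bs)"
    unfolding reducible_quid_def by blast
  obtain a mid a' where as_eq: "as = a # mid @ [a']"
    using Cons_snoc_cases[of as] as by force
  obtain x w y where bs_eq: "bs = x # w @ [y]"
    using Cons_snoc_cases[of bs] bs by force
  have "quid_equiv cs (((a + y) # mid @ [a' + x]) @ w)"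
    using equiv by (simp add: as_eq bs_eq quid_sum_Cons_snoc)
  moreover have "3 \<le> length ((a + y) # mid @ [a' + x])"
    using as by (simp add: as_eq)
  moreover have "w \<noteq> []"
    using bs(1) unfolding bs_eq by auto
  moreover have "continuant w \<in> {1, -1}"
    using bs(2) ex_lambda_quiddity_Cons_snoc_iff[of w] unfolding bs_eq by blast
  ultimately show ?split
    by blast
next
  assume ?split
  then obtain v w where equiv: "quid_equiv cs (v @ w)" and v: "3 \<le> length v" and w: "w \<noteq> []"
    and unit: "continuant w \<in> {1, -1}"
    by blast
  obtain x y where bs: "lambda_quiddity (x # w @ [y])"
    using unit ex_lambda_quiddity_Cons_snoc_iff by blast
  obtain a mid a' where v_eq: "v = a # mid @ [a']"
    using Cons_snoc_cases[of v] v by force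
  have "quid_sum ((a - y) # mid @ [a' - x]) (x # w @ [y]) = v @ w"
    by (simp add: v_eq quid_sum_Cons_snoc)
  moreover have "3 \<le> length ((a - y) # mid @ [a' - x])"
    using v by (simp add: v_eq)
  moreover have "3 \<le> length (x # w @ [y])"
    using w by (cases w) simp_all
  moreover have "3 \<le> length cs"
    using length_quid_equiv[OF equiv] v by simp
  ultimately show "reducible_quid cs"
    unfolding reducible_quid_def using assms equiv bs by metis
qed

lemma irreducible_quid_continuant_nonunit:
  assumes irr: "irreducible_quid cs" and cs: "cs = u @ w @ v"
    and uv: "3 \<le> length u + length v" and w: "w \<noteq> []"
  shows "continuant w \<notin> {1, -1}"
proof
  assume unit: "continuant w \<in> {1, -1}"
  have "rotate (length (u @ w)) cs = (v @ u) @ w"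
    using rotate_append[of "u @ w" v] cs by simp
  then have "quid_equiv cs ((v @ u) @ w)"
    unfolding quid_equiv_def by metis
  moreover have "3 \<le> length (v @ u)"
    using uv by simp
  moreover have "lambda_quiddity cs"
    using irr by (simp add: irreducible_quid_def)
  ultimately have "reducible_quid cs"
    using w unit reducible_quid_iff_unit_continuant by blast
  with irr show False
    by (simp add: irreducible_quid_def)
qed

lemma irreducible_quid_nth_nonunit:
  assumes "irreducible_quid cs" "4 \<le> length cs" "i < length cs"
  shows "cs ! i \<notin> {1, -1}"
  using irreducible_quid_continuant_nonunit[OF assms(1), of "take i cs" "[cs ! i]" "drop (Suc i) cs"]
    assms(2,3) id_take_nth_drop[OF assms(3)]
  by simp

lemma irreducible_quid_adjacent_nonunit:
  assumes "irreducible_quid cs" "5 \<le> length cs" "Suc i < length cs"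
  shows "cs ! Suc i * cs ! i - 1 \<notin> {1, -1}"
proof -
  have "cs = take i cs @ [cs ! i, cs ! Suc i] @ drop (Suc (Suc i)) cs"
    using assms(3) by (simp add: Cons_nth_drop_Suc)
  then have "continuant [cs ! i, cs ! Suc i] \<notin> {1, -1}"
    by (rule irreducible_quid_continuant_nonunit[OF assms(1)]) (use assms(2,3) in simp_all)
  then show ?thesis
    by simp
qed

lemma lambda_quiddity_length3:
  fixes a b c :: "'a::comm_ring_1"
  assumes "lambda_quiddity [a, b, c]"
  shows "(a = 1 \<and> b = 1 \<and> c = 1) \<or> (a = -1 \<and> b = -1 \<and> c = -1)"
proof -
  have M: "Mquid [a, b, c] = (c * (b * a - 1) - a, 1 - c * b, b * a - 1, - b)"
    by (simp add: Mquid_def id2_def elem_mat_def algebra_simps)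
  from assms consider "Mquid [a, b, c] = id2" | "Mquid [a, b, c] = neg_id2"
    unfolding lambda_quiddity_def by blast
  then show ?thesis
  proof cases
    case 1
    then have "b = -1" "b * a = 1" "c * b = 1"
      unfolding M id2_def by (auto simp: minus_equation_iff)
    then have "- a = 1" "- c = 1"
      by simp_all
    with \<open>b = -1\<close> show ?thesis
      by (metis minus_minus)
  next
    case 2
    then have "b = 1" "b * a = 1" "c * b = 1"
      unfolding M neg_id2_def by auto
    then show ?thesis
      by simp
  qed
qed

lemma lambda_quiddity_length4:
  fixes a b c d :: "'a::comm_ring_1"
  assumes "lambda_quiddity [a, b, c, d]"
  shows "(c = - a \<and> d = - b \<and> a * b = 0) \<or> (c = a \<and> d = b \<and> a * b = 2)"
proof -
  have M: "Mquid [a, b, c, d] =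
      (d * (c * (b * a - 1) - a) - (b * a - 1), d * (1 - c * b) + b, c * (b * a - 1) - a, 1 - c * b)"
    by (simp add: Mquid_def id2_def elem_mat_def algebra_simps)
  from assms consider "Mquid [a, b, c, d] = id2" | "Mquid [a, b, c, d] = neg_id2"
    unfolding lambda_quiddity_def by blast
  then show ?thesis
  proof cases
    case 1
    then have eqs: "c * b = 0" "d * (1 - c * b) + b = 0" "c * (b * a - 1) - a = 0"
        "d * (c * (b * a - 1) - a) - (b * a - 1) = 1"
      unfolding M id2_def by auto
    have "d = - b"
      using eqs(1,2) by (simp add: add_eq_0_iff2 add.commute)
    moreover have "c = - a"
      using eqs(1,3)
      by (simp add: right_diff_distrib add_eq_0_iff2 equation_minus_iff flip: mult.assoc)
    moreover have "a * b = 0"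
      using eqs(3,4) by (simp add: mult.commute)
    ultimately show ?thesis
      by blast
  next
    case 2
    then have eqs: "1 - c * b = -1" "d * (1 - c * b) + b = 0" "c * (b * a - 1) - a = 0"
        "d * (c * (b * a - 1) - a) - (b * a - 1) = -1"
      unfolding M neg_id2_def by auto
    have ab: "a * b = 2"
      using eqs(3,4) by (simp add: mult.commute)
    moreover have "d = b"
      using eqs(1,2) by simp
    moreover have "c = a"
      using eqs(3) ab by (simp add: mult.commute)
    ultimately show ?thesis
      by blast
  qed
qed

lemma replicate_hd_if_adjacent_eq:
  assumes "\<And>i. Suc i < length xs \<Longrightarrow> xs ! i = xs ! Suc i"
  shows "xs = replicate (length xs) (hd xs)"
proof (rule nth_equalityI)
  fix i
  assume "i < length xs"
  then show "xs ! i = replicate (length xs) (hd xs) ! i"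
    using assms by (induction i) (auto simp: hd_conv_nth)
qed simp

lemma num2_cases: "(x :: 2) = 0 \<or> x = 1"
proof (cases x)
  case (of_int z)
  then show ?thesis
    by (cases "z = 0"; cases "z = 1"; auto)
qed

lemma num3_cases: "(x :: 3) = 0 \<or> x = 1 \<or> x = -1"
proof (cases x)
  case (of_int z)
  then show ?thesis
    by (cases "z = 0"; cases "z = 1"; cases "z = 2"; auto)
qed

lemma Z2xZ3_cases: "x \<in> {(0, 0), (0, 1), (0, -1), (1, 0), (1, 1), (1, -1)}"
  for x :: "2 \<times> 3"
  using num2_cases[of "fst x"] num3_cases[of "snd x"] by (cases x) auto

lemma Z2xZ3_nonunit_cases: "x \<notin> {1, -1} \<Longrightarrow> x \<in> {(0, 0), (0, 1), (0, -1), (1, 0)}"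
  for x :: "2 \<times> 3"
  using Z2xZ3_cases[of x] by (auto simp: one_prod_def)

lemma Z2xZ3_adjacent_nonunits:
  fixes x y :: "2 \<times> 3"
  assumes "x \<notin> {1, -1}" "y \<notin> {1, -1}" "y * x - 1 \<notin> {1, -1}"
  shows "x = y \<and> x \<in> {(0, 1), (0, -1), (1, 0)}"
  using Z2xZ3_nonunit_cases[OF assms(1)] Z2xZ3_nonunit_cases[OF assms(2)] assms(3)
  by (auto simp: times_prod_def one_prod_def)

lemma numeral_2_Z2xZ3: "(2 :: 2 \<times> 3) = (0, -1)"
proof -
  have "(1 :: 2 \<times> 3) + 1 = (0, -1)"
    by (simp add: one_prod_def)
  then show ?thesis
    by simp
qed

definition Z2xZ3_irreducibles :: "(2 \<times> 3) list list" where
  "Z2xZ3_irreducibles =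
     [ [(1,1), (1,1), (1,1)],
       [(1,-1), (1,-1), (1,-1)],
       [(0,0), (0,0), (0,0), (0,0)],
       [(0,0), (0,1), (0,0), (0,-1)],
       [(0,0), (1,0), (0,0), (1,0)],
       [(0,1), (0,-1), (0,1), (0,-1)],
       [(1,0), (0,-1), (1,0), (0,1)],
       [(1,0), (1,0), (1,0), (1,0), (1,0), (1,0)],
       [(0,1), (0,1), (0,1), (0,1), (0,1), (0,1)],
       [(0,-1), (0,-1), (0,-1), (0,-1), (0,-1), (0,-1)] ]"

definition Z2xZ3_irreducible_rotations :: "(2 \<times> 3) list list" where
  "Z2xZ3_irreducible_rotations = [rotate k qs. qs \<leftarrow> Z2xZ3_irreducibles, k \<leftarrow> [0..<length qs]]"

lemmas Z2xZ3_irreducible_rotations_eval =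
  Z2xZ3_irreducible_rotations_def Z2xZ3_irreducibles_def upt_rec rotate_drop_take

lemma in_set_rotations_iff:
  assumes "\<forall>qs\<in>set qss. qs \<noteq> []"
  shows "cs \<in> set [rotate k qs. qs \<leftarrow> qss, k \<leftarrow> [0..<length qs]] \<longleftrightarrow>
    (\<exists>qs\<in>set qss. \<exists>k. cs = rotate k qs)"
proof -
  have "cs \<in> set [rotate k qs. qs \<leftarrow> qss, k \<leftarrow> [0..<length qs]] \<longleftrightarrow>
      (\<exists>qs\<in>set qss. \<exists>k<length qs. cs = rotate k qs)"
    by force
  also have "\<dots> \<longleftrightarrow> (\<exists>qs\<in>set qss. \<exists>k. cs = rotate k qs)"
  proof (rule bex_cong[OF refl])
    fix qs
    assume "qs \<in> set qss"
    with assms have "qs \<noteq> []"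
      by blast
    then show "(\<exists>k<length qs. cs = rotate k qs) \<longleftrightarrow> (\<exists>k. cs = rotate k qs)"
      by (metis mod_less_divisor length_greater_0_conv rotate_conv_mod)
  qed
  finally show ?thesis .
qed

lemma in_Z2xZ3_irreducible_rotations_iff:
  "cs \<in> set Z2xZ3_irreducible_rotations \<longleftrightarrow> (\<exists>qs\<in>set Z2xZ3_irreducibles. \<exists>k. cs = rotate k qs)"
  unfolding Z2xZ3_irreducible_rotations_def
  by (rule in_set_rotations_iff) (simp add: Z2xZ3_irreducibles_def)

lemma quid_equiv_Z2xZ3_irreducible_rotations:
  assumes "cs \<in> set Z2xZ3_irreducible_rotations" "quid_equiv cs ys"
  shows "ys \<in> set Z2xZ3_irreducible_rotations"
proof -
  have rotate_closed: "rotate k xs \<in> set Z2xZ3_irreducible_rotations"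
    if "xs \<in> set Z2xZ3_irreducible_rotations" for k xs
  proof -
    from that obtain qs j where "qs \<in> set Z2xZ3_irreducibles" "xs = rotate j qs"
      by (auto simp: in_Z2xZ3_irreducible_rotations_iff)
    then show ?thesis
      by (auto simp: in_Z2xZ3_irreducible_rotations_iff rotate_rotate)
  qed
  have "\<forall>xs\<in>set Z2xZ3_irreducible_rotations. rev xs \<in> set Z2xZ3_irreducible_rotations"
    by (simp add: Z2xZ3_irreducible_rotations_eval)
  then show ?thesis
    using assms rotate_closed by (auto simp: quid_equiv_def)
qed

lemma irreducible_quid_if_in_Z2xZ3_irreducible_rotations:
  assumes cs: "cs \<in> set Z2xZ3_irreducible_rotations"
  shows "irreducible_quid cs"
proof -
  have "\<forall>xs\<in>set Z2xZ3_irreducible_rotations. lambda_quiddity xs \<and> 3 \<le> length xs"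
    by (simp add: Z2xZ3_irreducible_rotations_eval lambda_quiddity_def Mquid_def elem_mat_def
        id2_def neg_id2_def times_prod_def one_prod_def zero_prod_def)
  with cs have lq: "lambda_quiddity cs" and len: "3 \<le> length cs"
    by auto
  have nonunit_tails: "\<forall>xs\<in>set Z2xZ3_irreducible_rotations.
      list_all (\<lambda>i. continuant (drop i xs) \<notin> {1, -1}) [3..<length xs]"
    by (simp add: Z2xZ3_irreducible_rotations_eval continuant_def Mquid_def elem_mat_def
        id2_def times_prod_def one_prod_def zero_prod_def)
  have "\<not> reducible_quid cs"
  proof
    assume "reducible_quid cs"
    then obtain v w where equiv: "quid_equiv cs (v @ w)" and v: "3 \<le> length v"
      and w: "w \<noteq> []" and unit: "continuant w \<in> {1, -1}"
      unfolding reducible_quid_iff_unit_continuant[OF lq] by blast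
    have "v @ w \<in> set Z2xZ3_irreducible_rotations"
      using quid_equiv_Z2xZ3_irreducible_rotations[OF cs equiv] .
    with nonunit_tails have "\<forall>i\<in>set [3..<length (v @ w)]. continuant (drop i (v @ w)) \<notin> {1, -1}"
      unfolding list_all_iff by blast
    moreover have "length v \<in> set [3..<length (v @ w)]"
      using v w by simp
    ultimately show False
      using unit by fastforce
  qed
  with lq len show ?thesis
    by (simp add: irreducible_quid_def)
qed

lemma irreducible_quid_length3_Z2xZ3:
  fixes cs :: "(2 \<times> 3) list"
  assumes "irreducible_quid cs" "length cs = 3"
  shows "cs \<in> set Z2xZ3_irreducible_rotations"
proof -
  obtain a b c where cs: "cs = [a, b, c]"
    using assms(2) by (auto simp: numeral_3_eq_3 length_Suc_conv)
  with assms(1) have "lambda_quiddity [a, b, c]"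
    by (simp add: irreducible_quid_def)
  then show ?thesis
    using lambda_quiddity_length3[of a b c]
    by (auto simp: cs one_prod_def Z2xZ3_irreducible_rotations_eval)
qed

lemma irreducible_quid_length4_Z2xZ3:
  fixes cs :: "(2 \<times> 3) list"
  assumes irr: "irreducible_quid cs" and len: "length cs = 4"
  shows "cs \<in> set Z2xZ3_irreducible_rotations"
proof -
  obtain a b c d where cs: "cs = [a, b, c, d]"
    using len by (auto simp: eval_nat_numeral length_Suc_conv)
  have "a \<notin> {1, -1}" "b \<notin> {1, -1}"
    using irreducible_quid_nth_nonunit[OF irr, of 0] irreducible_quid_nth_nonunit[OF irr, of 1]
    by (simp_all add: cs)
  note a = Z2xZ3_nonunit_cases[OF this(1)] and b = Z2xZ3_nonunit_cases[OF this(2)]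
  have "lambda_quiddity [a, b, c, d]"
    using irr by (simp add: cs irreducible_quid_def)
  then consider (alternating) "c = - a" "d = - b" "a * b = 0" | (periodic) "c = a" "d = b" "a * b = 2"
    using lambda_quiddity_length4 by blast
  then show ?thesis
  proof cases
    case alternating
    with a b show ?thesis
      unfolding insert_iff empty_iff
      by (elim disjE)
        (simp_all add: cs times_prod_def zero_prod_def Z2xZ3_irreducible_rotations_eval)
  next
    case periodic
    with a b show ?thesis
      unfolding insert_iff empty_iff
      by (elim disjE)
        (simp_all add: cs times_prod_def zero_prod_def numeral_2_Z2xZ3
          Z2xZ3_irreducible_rotations_eval)
  qed
qed

lemma irreducible_quid_replicate_Z2xZ3:
  fixes cs :: "(2 \<times> 3) list"
  assumes irr: "irreducible_quid cs" and len: "5 \<le> length cs"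
  obtains x where "x \<in> {(0, 1), (0, -1), (1, 0)}" "cs = replicate (length cs) x"
proof -
  have adjacent: "cs ! i = cs ! Suc i \<and> cs ! i \<in> {(0, 1), (0, -1), (1, 0)}"
    if "Suc i < length cs" for i
  proof -
    have "cs ! i \<notin> {1, -1}" "cs ! Suc i \<notin> {1, -1}"
      using irreducible_quid_nth_nonunit[OF irr] len that by simp_all
    moreover have "cs ! Suc i * cs ! i - 1 \<notin> {1, -1}"
      using irreducible_quid_adjacent_nonunit[OF irr len that] .
    ultimately show ?thesis
      by (rule Z2xZ3_adjacent_nonunits)
  qed
  have "cs = replicate (length cs) (hd cs)"
    using adjacent by (intro replicate_hd_if_adjacent_eq) blast
  moreover have "hd cs \<in> {(0, 1), (0, -1), (1, 0)}"
    using adjacent[of 0] len hd_conv_nth[of cs] by fastforce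
  ultimately show thesis
    using that by blast
qed

lemma irreducible_quid_length_ge5_Z2xZ3:
  fixes cs :: "(2 \<times> 3) list"
  assumes irr: "irreducible_quid cs" and len: "5 \<le> length cs"
  shows "cs \<in> set Z2xZ3_irreducible_rotations"
proof -
  obtain x where x: "x \<in> {(0, 1), (0, -1), (1, 0)}" and "cs = replicate (length cs) x"
    using irreducible_quid_replicate_Z2xZ3[OF irr len] .
  moreover define n where "n = length cs"
  ultimately have cs: "cs = replicate n x"
    by simp
  have "continuant (replicate 4 x) \<in> {1, -1}"
    using x by (auto simp: continuant_def Mquid_def elem_mat_def id2_def
        times_prod_def one_prod_def numeral_eq_Suc)
  moreover have "continuant (replicate 4 x) \<notin> {1, -1}" if "7 \<le> n"
  proof (rule irreducible_quid_continuant_nonunit[OF irr])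
    show "cs = [] @ replicate 4 x @ replicate (n - 4) x"
      using that by (simp add: cs flip: replicate_add)
  qed (use that in simp_all)
  ultimately have "n \<le> 6"
    by linarith
  moreover have "n \<noteq> 5"
  proof
    assume "n = 5"
    with irr have "lambda_quiddity (replicate 5 x)"
      by (simp add: cs irreducible_quid_def)
    with x show False
      by (auto simp: lambda_quiddity_def Mquid_def elem_mat_def id2_def neg_id2_def
          times_prod_def one_prod_def numeral_eq_Suc)
  qed
  ultimately have "n = 6"
    using len by (simp add: n_def)
  then have "cs = [x, x, x, x, x, x]"
    by (simp add: cs numeral_eq_Suc)
  then show ?thesis
    using x by (auto simp: Z2xZ3_irreducible_rotations_eval)
qed

lemma irreducible_quid_Z2xZ3_iff:
  "irreducible_quid (cs :: (2 \<times> 3) list) \<longleftrightarrow> cs \<in> set Z2xZ3_irreducible_rotations"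
proof
  assume irr: "irreducible_quid cs"
  then have "3 \<le> length cs"
    by (simp add: irreducible_quid_def)
  then consider "length cs = 3" | "length cs = 4" | "5 \<le> length cs"
    by linarith
  then show "cs \<in> set Z2xZ3_irreducible_rotations"
    by cases (use irr irreducible_quid_length3_Z2xZ3 irreducible_quid_length4_Z2xZ3
        irreducible_quid_length_ge5_Z2xZ3 in blast)+
qed (rule irreducible_quid_if_in_Z2xZ3_irreducible_rotations)

theorem proposition4p2:
  fixes cs :: "(2 \<times> 3) list"
  shows "irreducible_quid cs \<longleftrightarrow>
    (\<exists>qs \<in> set
       [ [(1,1), (1,1), (1,1)],
         [(1,-1), (1,-1), (1,-1)],
         [(0,0), (0,0), (0,0), (0,0)],
         [(0,0), (0,1), (0,0), (0,-1)],
         [(0,0), (1,0), (0,0), (1,0)],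
         [(0,1), (0,-1), (0,1), (0,-1)],
         [(1,0), (0,-1), (1,0), (0,1)],
         [(1,0), (1,0), (1,0), (1,0), (1,0), (1,0)],
         [(0,1), (0,1), (0,1), (0,1), (0,1), (0,1)],
         [(0,-1), (0,-1), (0,-1), (0,-1), (0,-1), (0,-1)] ].
     \<exists>k. cs = rotate k qs)"
  using irreducible_quid_Z2xZ3_iff[of cs] in_Z2xZ3_irreducible_rotations_iff[of cs]
  unfolding Z2xZ3_irreducibles_def by (rule trans)

end
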